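(* Fix $T>0$ and $v_f=\psi_m$ for some $m\in\{0,\dots,2J\}$. Consider the linear ODE $$\frac{d}{dt}v_t=(-iF_y-F_z^2+CF_z)v_t,\qquad v_0\in\mathbb{C}^N\setminus\{0\}.$$ For all sufficiently large real constants $C$, for every $v_0\ne0$ there exists $t\in[0,T]$ such that $v_t^*v_f\ne0$.
   Context: $2J\in\mathbb{N}$, $J>0$, $N=2J+1$; $\{\psi_k\}_{k=0}^{2J}$ standard basis of $\mathbb{C}^N$; $F_y\psi_k=ic_{k-J}\psi_{k+1}-ic_{J-k}\psi_{k-1}$, $F_z\psi_k=(k-J)\psi_k$, $c_m=\tfrac12\sqrt{(J-m)(J+m+1)}$. *)

theory Defs
  imports "HOL-Analysis.Analysis"
begin

text \<open>Convention: n = 2J (a natural number, n > 0), so J = n/2 and N = n+1.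
 Vectors in C^N are functions nat => complex restricted to indices 0..n;
 N x N matrices are functions nat => nat => complex restricted to 0..n.\<close>

definition spinJ :: "nat \<Rightarrow> real" where
  "spinJ n = real n / 2"

definition cc :: "nat \<Rightarrow> real \<Rightarrow> real" where
  "cc n m = (1/2) * sqrt ((spinJ n - m) * (spinJ n + m + 1))"

definition psi :: "nat \<Rightarrow> nat \<Rightarrow> complex" where
  "psi k = (\<lambda>j. if j = k then 1 else 0)"

definition Fz :: "nat \<Rightarrow> nat \<Rightarrow> nat \<Rightarrow> complex" where
  "Fz n j k = (if j = k then complex_of_real (real k - spinJ n) else 0)"

text \<open>Matrix of F_y: F_y psi_k = i c_{k-J} psi_{k+1} - i c_{J-k} psi_{k-1}
  (entry (j,k) is the j-th coordinate of F_y psi_k).\<close>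
definition Fy :: "nat \<Rightarrow> nat \<Rightarrow> nat \<Rightarrow> complex" where
  "Fy n j k =
     (if j = k + 1 then \<i> * complex_of_real (cc n (real k - spinJ n))
      else if k = j + 1 then - \<i> * complex_of_real (cc n (spinJ n - real k))
      else 0)"

definition mmul :: "nat \<Rightarrow> (nat \<Rightarrow> nat \<Rightarrow> complex) \<Rightarrow> (nat \<Rightarrow> nat \<Rightarrow> complex) \<Rightarrow> nat \<Rightarrow> nat \<Rightarrow> complex" where
  "mmul n A B = (\<lambda>j k. \<Sum>l\<le>n. A j l * B l k)"

definition Gen :: "nat \<Rightarrow> real \<Rightarrow> nat \<Rightarrow> nat \<Rightarrow> complex" where
  "Gen n C = (\<lambda>j k. - \<i> * Fy n j k - mmul n (Fz n) (Fz n) j k + complex_of_real C * Fz n j k)"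

definition solves_ode :: "nat \<Rightarrow> (nat \<Rightarrow> nat \<Rightarrow> complex) \<Rightarrow> real \<Rightarrow> (real \<Rightarrow> nat \<Rightarrow> complex) \<Rightarrow> bool" where
  "solves_ode n A T v \<longleftrightarrow>
     (\<forall>t\<in>{0..T}. \<forall>j\<le>n.
        ((\<lambda>s. v s j) has_vector_derivative (\<Sum>k\<le>n. A j k * v t k)) (at t within {0..T}))"

definition vdot :: "nat \<Rightarrow> (nat \<Rightarrow> complex) \<Rightarrow> (nat \<Rightarrow> complex) \<Rightarrow> complex" where
  "vdot n v w = (\<Sum>k\<le>n. cnj (v k) * w k)"

end

theory Submission
  imports Defs
begin

text \<open>If \<open>v\<^sub>t\<^sup>* \<psi>\<^sub>m\<close> vanished on [0,T], repeated differentiation would show that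
  every Krylov vector \<open>G\<^sup>k v\<^sub>0\<close> of the generator G has vanishing m-th entry. G is
  tridiagonal with nonzero off-diagonal entries, so on such vectors the head (entries below m)
  and the tail (entries above m) evolve independently, and solving the rows of G one at a
  time shows that either part bounds the whole vector. The diagonal entries
  \<open>C(k - J) - (k - J)\<^sup>2\<close> separate head and tail by a gap of order C: the shifted map
  \<open>CJ - G\<close> multiplies the l1 norm of the head by at least a and that of the tail by at
  most b, where b < a for large C. Iterating it k times gives
  \<open>a\<^sup>k |head| \<le> K b\<^sup>k |tail|\<close> for all k, so the head vanishes, and then so does \<open>v\<^sub>0\<close>.\<close>

definition matvec :: "nat \<Rightarrow> (nat \<Rightarrow> nat \<Rightarrow> complex) \<Rightarrow> (nat \<Rightarrow> complex) \<Rightarrow> nat \<Rightarrow> complex" where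
  "matvec n A y = (\<lambda>j. \<Sum>l\<le>n. A j l * y l)"

definition krylov_vanishes :: "nat \<Rightarrow> (nat \<Rightarrow> nat \<Rightarrow> complex) \<Rightarrow> nat \<Rightarrow> (nat \<Rightarrow> complex) \<Rightarrow> bool" where
  "krylov_vanishes n A m y \<longleftrightarrow> (\<forall>k. (matvec n A ^^ k) y m = 0)"

lemma krylov_vanishesD: "krylov_vanishes n A m y \<Longrightarrow> y m = 0"
  unfolding krylov_vanishes_def by (metis funpow_0)

lemma krylov_vanishes_matvec:
  assumes "krylov_vanishes n A m y"
  shows "krylov_vanishes n A m (matvec n A y)"
  unfolding krylov_vanishes_def
proof
  fix k
  show "(matvec n A ^^ k) (matvec n A y) m = 0"
    using assms[unfolded krylov_vanishes_def, rule_format, of "Suc k"] by (simp add: funpow_swap1)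
qed

lemma solves_ode_matvec:
  assumes "solves_ode n A T v"
  shows "solves_ode n A T (\<lambda>t. matvec n A (v t))"
  unfolding solves_ode_def
proof (intro ballI allI impI)
  fix t j assume "t \<in> {0..T}" "j \<le> n"
  have "((\<lambda>s. \<Sum>l\<le>n. A j l * v s l) has_vector_derivative
          (\<Sum>l\<le>n. A j l * matvec n A (v t) l)) (at t within {0..T})"
    using assms \<open>t \<in> {0..T}\<close>
    by (intro has_vector_derivative_sum has_vector_derivative_mult_right)
       (auto simp: solves_ode_def matvec_def)
  then show "((\<lambda>s. matvec n A (v s) j) has_vector_derivative
          (\<Sum>k\<le>n. A j k * matvec n A (v t) k)) (at t within {0..T})"
    by (simp add: matvec_def)
qed

lemma solves_ode_vanishing_component:
  assumes "solves_ode n A T v" "T > 0" "j \<le> n" "\<forall>t\<in>{0..T}. v t j = 0" "t \<in> {0..T}"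
  shows "matvec n A (v t) j = 0"
proof -
  have "((\<lambda>s. v s j) has_vector_derivative matvec n A (v t) j) (at t within {0..T})"
    using assms by (simp add: solves_ode_def matvec_def)
  moreover have "((\<lambda>s. v s j) has_vector_derivative 0) (at t within {0..T})"
    using assms
    by (intro has_vector_derivative_transform[OF \<open>t \<in> {0..T}\<close> _ has_vector_derivative_const]) auto
  ultimately show ?thesis
    using vector_derivative_unique_within_closed_interval[of 0 T t] assms by auto
qed

lemma solves_ode_krylov_vanishes:
  assumes "solves_ode n A T v" "T > 0" "m \<le> n" "\<forall>t\<in>{0..T}. v t m = 0"
  shows "krylov_vanishes n A m (v 0)"
proof -
  have "solves_ode n A T (\<lambda>t. (matvec n A ^^ k) (v t)) \<and>
      (\<forall>t\<in>{0..T}. (matvec n A ^^ k) (v t) m = 0)" for k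
  proof (induction k)
    case (Suc k)
    then show ?case
      using solves_ode_matvec[of n A T "\<lambda>t. (matvec n A ^^ k) (v t)"]
        solves_ode_vanishing_component[of n A T "\<lambda>t. (matvec n A ^^ k) (v t)" m] assms(2,3)
      by simp
  qed (use assms in auto)
  then show ?thesis
    unfolding krylov_vanishes_def using \<open>T > 0\<close> by simp
qed

definition tridiagonal :: "nat \<Rightarrow> (nat \<Rightarrow> nat \<Rightarrow> complex) \<Rightarrow> bool" where
  "tridiagonal n A \<longleftrightarrow> (\<forall>p\<le>n. \<forall>l\<le>n. Suc p < l \<or> Suc l < p \<longrightarrow> A p l = 0)"

definition l1_on :: "nat set \<Rightarrow> (nat \<Rightarrow> complex) \<Rightarrow> real" where
  "l1_on I y = (\<Sum>k\<in>I. cmod (y k))"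

definition decoupled_on :: "nat \<Rightarrow> (nat \<Rightarrow> nat \<Rightarrow> complex) \<Rightarrow> nat set \<Rightarrow> (nat \<Rightarrow> complex) \<Rightarrow> bool" where
  "decoupled_on n A I y \<longleftrightarrow> (\<forall>k\<in>I. matvec n A y k = (\<Sum>l\<in>I. A k l * y l))"

lemma l1_on_nonneg: "0 \<le> l1_on I y"
  unfolding l1_on_def by (simp add: sum_nonneg)

lemma norm_le_l1_on: "finite I \<Longrightarrow> k \<in> I \<Longrightarrow> cmod (y k) \<le> l1_on I y"
  unfolding l1_on_def by (rule member_le_sum) auto

lemma matvec_eq_block_sum:
  assumes "I \<subseteq> {..n}" "\<forall>l\<le>n. l \<notin> I \<longrightarrow> A k l * y l = 0"
  shows "matvec n A y k = (\<Sum>l\<in>I. A k l * y l)"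
  unfolding matvec_def using assms by (intro sum.mono_neutral_right) auto

lemma tridiagonal_decoupled_head:
  assumes "tridiagonal n A" "m \<le> n" "y m = 0"
  shows "decoupled_on n A {..<m} y"
  unfolding decoupled_on_def
proof
  fix k assume "k \<in> {..<m}"
  then have "A k l * y l = 0" if "l \<le> n" "l \<notin> {..<m}" for l
    using assms that by (cases "l = m") (auto simp: tridiagonal_def)
  then show "matvec n A y k = (\<Sum>l\<in>{..<m}. A k l * y l)"
    using \<open>m \<le> n\<close> by (intro matvec_eq_block_sum) auto
qed

lemma tridiagonal_decoupled_tail:
  assumes "tridiagonal n A" "y m = 0"
  shows "decoupled_on n A {m<..n} y"
  unfolding decoupled_on_def
proof
  fix k assume "k \<in> {m<..n}"
  then have "A k l * y l = 0" if "l \<le> n" "l \<notin> {m<..n}" for l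
    using assms that by (cases "l = m") (auto simp: tridiagonal_def)
  then show "matvec n A y k = (\<Sum>l\<in>{m<..n}. A k l * y l)"
    by (intro matvec_eq_block_sum) auto
qed

lemma l1_on_matvec_le:
  assumes "finite I" "decoupled_on n A I y"
  shows "l1_on I (matvec n A y) \<le> (\<Sum>k\<in>I. \<Sum>l\<in>I. cmod (A k l)) * l1_on I y"
proof -
  have row: "cmod (matvec n A y k) \<le> (\<Sum>l\<in>I. cmod (A k l)) * l1_on I y" if "k \<in> I" for k
  proof -
    have "cmod (matvec n A y k) \<le> (\<Sum>l\<in>I. cmod (A k l) * cmod (y l))"
      using assms that norm_sum[of "\<lambda>l. A k l * y l" I] by (simp add: decoupled_on_def norm_mult)
    also have "\<dots> \<le> (\<Sum>l\<in>I. cmod (A k l) * l1_on I y)"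
      using assms by (intro sum_mono mult_left_mono norm_le_l1_on) auto
    finally show ?thesis
      by (simp add: sum_distrib_right)
  qed
  have "l1_on I (matvec n A y) \<le> (\<Sum>k\<in>I. (\<Sum>l\<in>I. cmod (A k l)) * l1_on I y)"
    unfolding l1_on_def[of I "matvec n A y"] by (rule sum_mono) (rule row)
  then show ?thesis
    by (simp add: sum_distrib_right)
qed

lemma upper_hessenberg_row_solve:
  assumes "\<And>l. Suc q < l \<Longrightarrow> l \<le> n \<Longrightarrow> A q l = 0" "q < n" "A q (Suc q) \<noteq> 0"
    and "\<And>l. l \<le> q \<Longrightarrow> cmod (z l) \<le> B" "cmod (matvec n A z q) \<le> B'"
  shows "cmod (z (Suc q)) \<le> (B' + (\<Sum>l\<le>q. cmod (A q l)) * B) / cmod (A q (Suc q))"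
proof -
  have "matvec n A z q = (\<Sum>l\<le>Suc q. A q l * z l)"
    unfolding matvec_def using assms(1,2) by (intro sum.mono_neutral_right) auto
  then have "A q (Suc q) * z (Suc q) = matvec n A z q - (\<Sum>l\<le>q. A q l * z l)"
    by simp
  then have "cmod (A q (Suc q)) * cmod (z (Suc q)) = cmod (matvec n A z q - (\<Sum>l\<le>q. A q l * z l))"
    by (metis norm_mult)
  also have "\<dots> \<le> cmod (matvec n A z q) + (\<Sum>l\<le>q. cmod (A q l) * cmod (z l))"
    using norm_triangle_ineq4 norm_sum[of "\<lambda>l. A q l * z l" "{..q}"]
    by (smt (verit) norm_mult sum.cong)
  also have "\<dots> \<le> B' + (\<Sum>l\<le>q. cmod (A q l)) * B"
    unfolding sum_distrib_right using assms(4,5) by (intro add_mono sum_mono mult_left_mono) auto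
  finally show ?thesis
    using assms(3) by (simp add: pos_le_divide_eq mult.commute)
qed

text \<open>The map coord lets the lemma also be applied to reversed vectors, where the
  subdiagonal of a tridiagonal matrix becomes the superdiagonal.\<close>

lemma propagate_along_superdiagonal:
  fixes coord :: "'v \<Rightarrow> nat \<Rightarrow> complex"
  assumes upper: "\<And>p l. p < n \<Longrightarrow> Suc p < l \<Longrightarrow> l \<le> n \<Longrightarrow> A p l = 0"
    and super: "\<And>p. p < n \<Longrightarrow> A p (Suc p) \<noteq> 0"
    and closed: "\<And>y. P y \<Longrightarrow> P (f y)"
    and coord_f: "\<And>y. P y \<Longrightarrow> coord (f y) = matvec n A (coord y)"
    and N_f: "\<And>y. P y \<Longrightarrow> N (f y) \<le> R * N y"
    and base: "\<And>y l. P y \<Longrightarrow> l \<le> m \<Longrightarrow> cmod (coord y l) \<le> N y"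
  shows "\<exists>K\<ge>0. \<forall>y. P y \<longrightarrow> (\<forall>l\<le>n. cmod (coord y l) \<le> K * N y)"
proof -
  have N_nonneg: "0 \<le> N y" if "P y" for y
    using base[OF that, of 0] norm_ge_zero order_trans by blast
  have "\<exists>K\<ge>0. \<forall>y. P y \<longrightarrow> (\<forall>l\<le>q. l \<le> n \<longrightarrow> cmod (coord y l) \<le> K * N y)" for q
  proof (induction q)
    case 0
    show ?case
      using base by (intro exI[of _ 1]) auto
  next
    case (Suc q)
    then obtain K where "K \<ge> 0"
      and K: "\<And>y l. P y \<Longrightarrow> l \<le> q \<Longrightarrow> l \<le> n \<Longrightarrow> cmod (coord y l) \<le> K * N y"
      by blast
    define K' where "K' = max K ((K * R + (\<Sum>l\<le>q. cmod (A q l)) * K) / cmod (A q (Suc q)))"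
    have next_entry: "cmod (coord y (Suc q)) \<le> K' * N y" if "P y" "Suc q \<le> n" for y
    proof -
      have "cmod (coord (f y) q) \<le> K * N (f y)"
        using K[OF closed[OF \<open>P y\<close>], of q] that by simp
      also have "\<dots> \<le> K * (R * N y)"
        using N_f[OF \<open>P y\<close>] \<open>K \<ge> 0\<close> by (rule mult_left_mono)
      finally have "cmod (matvec n A (coord y) q) \<le> K * R * N y"
        using coord_f[OF \<open>P y\<close>] by simp
      then have "cmod (coord y (Suc q))
          \<le> (K * R * N y + (\<Sum>l\<le>q. cmod (A q l)) * (K * N y)) / cmod (A q (Suc q))"
        using K[OF \<open>P y\<close>] that by (intro upper_hessenberg_row_solve upper super) auto
      also have "\<dots> = (K * R + (\<Sum>l\<le>q. cmod (A q l)) * K) / cmod (A q (Suc q)) * N y"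
        by (simp add: algebra_simps add_divide_distrib)
      also have "\<dots> \<le> K' * N y"
        using N_nonneg[OF \<open>P y\<close>] unfolding K'_def by (intro mult_right_mono) auto
      finally show ?thesis .
    qed
    have earlier_entries: "cmod (coord y l) \<le> K' * N y" if "P y" "l \<le> q" "l \<le> n" for y l
    proof -
      have "K * N y \<le> K' * N y"
        using N_nonneg[OF \<open>P y\<close>] by (intro mult_right_mono) (auto simp: K'_def)
      then show ?thesis
        using K[OF that] by linarith
    qed
    have "K' \<ge> 0"
      using \<open>K \<ge> 0\<close> by (simp add: K'_def)
    then show ?case
      using earlier_entries next_entry by (intro exI[of _ K']) (auto simp: le_Suc_eq)
  qed
  then show ?thesis
    by blast
qed

lemma krylov_vanishes_bounded_by_head:
  assumes "tridiagonal n A" "\<And>p. p < n \<Longrightarrow> A p (Suc p) \<noteq> 0" "m \<le> n"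
  shows "\<exists>K\<ge>0. \<forall>y. krylov_vanishes n A m y \<longrightarrow> (\<forall>l\<le>n. cmod (y l) \<le> K * l1_on {..<m} y)"
proof (rule propagate_along_superdiagonal[where f = "matvec n A" and coord = "\<lambda>y. y"
      and R = "\<Sum>k<m. \<Sum>l<m. cmod (A k l)" and m = m])
  show "A p l = 0" if "p < n" "Suc p < l" "l \<le> n" for p l
    using assms(1) that by (simp add: tridiagonal_def)
  show "l1_on {..<m} (matvec n A y) \<le> (\<Sum>k<m. \<Sum>l<m. cmod (A k l)) * l1_on {..<m} y"
    if "krylov_vanishes n A m y" for y
    using assms(1,3) krylov_vanishesD[OF that]
    by (intro l1_on_matvec_le tridiagonal_decoupled_head) auto
  show "cmod (y l) \<le> l1_on {..<m} y" if "krylov_vanishes n A m y" "l \<le> m" for y l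
    using krylov_vanishesD[OF that(1)] that(2) norm_le_l1_on[of "{..<m}" l y]
      l1_on_nonneg[of "{..<m}" y]
    by (cases "l = m") auto
qed (use assms(2) krylov_vanishes_matvec in auto)

lemma matvec_reflect:
  "matvec n (\<lambda>j k. A (n - j) (n - k)) (\<lambda>j. y (n - j)) = (\<lambda>j. matvec n A y (n - j))"
  unfolding matvec_def fun_eq_iff
  by (intro allI sum.reindex_bij_witness[of _ "\<lambda>l. n - l" "\<lambda>l. n - l"]) auto

lemma krylov_vanishes_bounded_by_tail:
  assumes "tridiagonal n A" "\<And>p. p < n \<Longrightarrow> A (Suc p) p \<noteq> 0" "m \<le> n"
  shows "\<exists>K\<ge>0. \<forall>y. krylov_vanishes n A m y \<longrightarrow> (\<forall>l\<le>n. cmod (y l) \<le> K * l1_on {m<..n} y)"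
proof -
  have "\<exists>K\<ge>0. \<forall>y. krylov_vanishes n A m y \<longrightarrow>
          (\<forall>l\<le>n. cmod (y (n - l)) \<le> K * l1_on {m<..n} y)"
  proof (rule propagate_along_superdiagonal[where A = "\<lambda>j k. A (n - j) (n - k)"
        and f = "matvec n A" and coord = "\<lambda>y j. y (n - j)"
        and R = "\<Sum>k\<in>{m<..n}. \<Sum>l\<in>{m<..n}. cmod (A k l)" and m = "n - m"])
    show "A (n - p) (n - l) = 0" if "p < n" "Suc p < l" "l \<le> n" for p l
      using assms(1) that by (simp add: tridiagonal_def)
    show "A (n - p) (n - Suc p) \<noteq> 0" if "p < n" for p
      using assms(2)[of "n - Suc p"] that by (simp add: Suc_diff_Suc)
    show "l1_on {m<..n} (matvec n A y)
        \<le> (\<Sum>k\<in>{m<..n}. \<Sum>l\<in>{m<..n}. cmod (A k l)) * l1_on {m<..n} y"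
      if "krylov_vanishes n A m y" for y
      using assms(1) krylov_vanishesD[OF that]
      by (intro l1_on_matvec_le tridiagonal_decoupled_tail) auto
    show "cmod (y (n - l)) \<le> l1_on {m<..n} y" if "krylov_vanishes n A m y" "l \<le> n - m" for y l
      using krylov_vanishesD[OF that(1)] that(2) assms(3) norm_le_l1_on[of "{m<..n}" "n - l" y]
        l1_on_nonneg[of "{m<..n}" y]
      by (cases "n - l = m") auto
  qed (use krylov_vanishes_matvec matvec_reflect in auto)
  then obtain K where "K \<ge> 0"
    and K: "\<And>y l. krylov_vanishes n A m y \<Longrightarrow> l \<le> n \<Longrightarrow> cmod (y (n - l)) \<le> K * l1_on {m<..n} y"
    by blast
  have "cmod (y l) \<le> K * l1_on {m<..n} y" if "krylov_vanishes n A m y" "l \<le> n" for y l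
    using K[OF that(1), of "n - l"] that(2) by simp
  then show ?thesis
    using \<open>K \<ge> 0\<close> by blast
qed

definition shift_matvec ::
    "nat \<Rightarrow> (nat \<Rightarrow> nat \<Rightarrow> complex) \<Rightarrow> real \<Rightarrow> (nat \<Rightarrow> complex) \<Rightarrow> nat \<Rightarrow> complex" where
  "shift_matvec n A s y = (\<lambda>j. complex_of_real s * y j - matvec n A y j)"

lemma matvec_power_diff:
  "(matvec n A ^^ k) (\<lambda>j. c * y j - z j) = (\<lambda>j. c * (matvec n A ^^ k) y j - (matvec n A ^^ k) z j)"
  by (induction k) (simp_all add: matvec_def sum_subtractf sum_distrib_left algebra_simps)

lemma krylov_vanishes_shift_matvec:
  "krylov_vanishes n A m y \<Longrightarrow> krylov_vanishes n A m (shift_matvec n A s y)"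
  using krylov_vanishes_matvec[of n A m y]
  by (simp add: krylov_vanishes_def shift_matvec_def matvec_power_diff)

lemma shift_matvec_row_deviation:
  fixes d e s :: real
  assumes "finite I" "decoupled_on n A I y" "k \<in> I" "A k k = complex_of_real d"
    and off: "\<And>l. l \<in> I \<Longrightarrow> l \<noteq> k \<Longrightarrow> cmod (A k l) \<le> e" and "0 \<le> e"
  shows "cmod (shift_matvec n A s y k - complex_of_real (s - d) * y k) \<le> e * l1_on I y"
proof -
  have "shift_matvec n A s y k - complex_of_real (s - d) * y k = - (\<Sum>l\<in>I - {k}. A k l * y l)"
    using assms(1-4) by (simp add: shift_matvec_def decoupled_on_def sum.remove algebra_simps)
  then have "cmod (shift_matvec n A s y k - complex_of_real (s - d) * y k)
      \<le> (\<Sum>l\<in>I - {k}. cmod (A k l) * cmod (y l))"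
    using norm_sum[of "\<lambda>l. A k l * y l" "I - {k}"] by (simp add: norm_mult)
  also have "\<dots> \<le> (\<Sum>l\<in>I - {k}. e * cmod (y l))"
    using off by (intro sum_mono mult_right_mono) auto
  also have "\<dots> \<le> (\<Sum>l\<in>I. e * cmod (y l))"
    using assms(1) \<open>0 \<le> e\<close> by (intro sum_mono2) auto
  finally show ?thesis
    by (simp add: l1_on_def sum_distrib_left)
qed

lemma l1_on_shift_matvec_ge:
  fixes a e s :: real and d :: "nat \<Rightarrow> real"
  assumes "finite I" "decoupled_on n A I y"
    and diag: "\<And>k. k \<in> I \<Longrightarrow> A k k = complex_of_real (d k)"
    and off: "\<And>k l. k \<in> I \<Longrightarrow> l \<in> I \<Longrightarrow> l \<noteq> k \<Longrightarrow> cmod (A k l) \<le> e" and "0 \<le> e"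
    and gap: "\<And>k. k \<in> I \<Longrightarrow> a + card I * e \<le> s - d k"
  shows "a * l1_on I y \<le> l1_on I (shift_matvec n A s y)"
proof -
  have row: "(a + card I * e) * cmod (y k) - e * l1_on I y \<le> cmod (shift_matvec n A s y k)"
    if "k \<in> I" for k
  proof -
    have "(a + card I * e) * cmod (y k) \<le> cmod (complex_of_real (s - d k) * y k)"
      using gap[OF that] by (simp add: norm_mult mult_right_mono del: of_real_diff)
    moreover have "cmod (shift_matvec n A s y k - complex_of_real (s - d k) * y k) \<le> e * l1_on I y"
      using assms that by (intro shift_matvec_row_deviation) auto
    ultimately show ?thesis
      using norm_triangle_ineq3[of "shift_matvec n A s y k" "complex_of_real (s - d k) * y k"]
      by (smt (verit) norm_minus_commute)
  qed
  have "(\<Sum>k\<in>I. (a + card I * e) * cmod (y k) - e * l1_on I y) \<le> l1_on I (shift_matvec n A s y)"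
    unfolding l1_on_def[of I "shift_matvec n A s y"] using row by (rule sum_mono)
  moreover have "(\<Sum>k\<in>I. (a + card I * e) * cmod (y k) - e * l1_on I y)
      = (a + card I * e) * l1_on I y - card I * (e * l1_on I y)"
    by (simp add: sum_subtractf l1_on_def sum_distrib_left)
  ultimately show ?thesis
    by (simp add: algebra_simps)
qed

lemma l1_on_shift_matvec_le:
  fixes b e s :: real and d :: "nat \<Rightarrow> real"
  assumes "finite I" "decoupled_on n A I y"
    and diag: "\<And>k. k \<in> I \<Longrightarrow> A k k = complex_of_real (d k)"
    and off: "\<And>k l. k \<in> I \<Longrightarrow> l \<in> I \<Longrightarrow> l \<noteq> k \<Longrightarrow> cmod (A k l) \<le> e" and "0 \<le> e"
    and gap: "\<And>k. k \<in> I \<Longrightarrow> 0 \<le> s - d k \<and> s - d k \<le> b - card I * e"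
  shows "l1_on I (shift_matvec n A s y) \<le> b * l1_on I y"
proof -
  have row: "cmod (shift_matvec n A s y k) \<le> (b - card I * e) * cmod (y k) + e * l1_on I y"
    if "k \<in> I" for k
  proof -
    have "cmod (complex_of_real (s - d k) * y k) \<le> (b - card I * e) * cmod (y k)"
      using gap[OF that] by (simp add: norm_mult mult_right_mono del: of_real_diff)
    moreover have "cmod (shift_matvec n A s y k - complex_of_real (s - d k) * y k) \<le> e * l1_on I y"
      using assms that by (intro shift_matvec_row_deviation) auto
    ultimately show ?thesis
      using norm_triangle_ineq2[of "shift_matvec n A s y k" "complex_of_real (s - d k) * y k"]
      by linarith
  qed
  have "l1_on I (shift_matvec n A s y) \<le> (\<Sum>k\<in>I. (b - card I * e) * cmod (y k) + e * l1_on I y)"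
    unfolding l1_on_def[of I "shift_matvec n A s y"] using row by (rule sum_mono)
  moreover have "(\<Sum>k\<in>I. (b - card I * e) * cmod (y k) + e * l1_on I y)
      = (b - card I * e) * l1_on I y + card I * (e * l1_on I y)"
    by (simp add: sum.distrib l1_on_def sum_distrib_left)
  ultimately show ?thesis
    by (simp add: algebra_simps)
qed

lemma nonpos_if_geometric_domination:
  fixes a b u w :: real
  assumes "0 \<le> b" "b < a" "\<And>k. a ^ k * u \<le> b ^ k * w"
  shows "u \<le> 0"
proof (rule LIMSEQ_le_const)
  have "a > 0"
    using assms by simp
  show "(\<lambda>k. (b / a) ^ k * w) \<longlonglongrightarrow> 0"
    using assms \<open>a > 0\<close> by (intro tendsto_mult_left_zero LIMSEQ_power_zero) simp
  show "\<exists>N. \<forall>k\<ge>N. u \<le> (b / a) ^ k * w"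
    using assms(3) \<open>a > 0\<close> by (simp add: power_divide pos_le_divide_eq mult.commute)
qed

lemma krylov_vanishes_shift_matvec_power:
  "krylov_vanishes n A m x \<Longrightarrow> krylov_vanishes n A m ((shift_matvec n A s ^^ k) x)"
  by (induction k) (simp_all add: krylov_vanishes_shift_matvec)

lemma krylov_head_grows:
  fixes a e s :: real and d :: "nat \<Rightarrow> real"
  assumes "tridiagonal n A" "m \<le> n"
    and "\<And>k. k \<le> n \<Longrightarrow> A k k = complex_of_real (d k)"
    and "\<And>k l. k \<le> n \<Longrightarrow> l \<le> n \<Longrightarrow> l \<noteq> k \<Longrightarrow> cmod (A k l) \<le> e" "0 \<le> e"
    and "0 \<le> a" "\<And>k. k < m \<Longrightarrow> a + m * e \<le> s - d k"
    and "krylov_vanishes n A m x"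
  shows "a ^ k * l1_on {..<m} x \<le> l1_on {..<m} ((shift_matvec n A s ^^ k) x)"
proof (induction k)
  case (Suc k)
  let ?y = "(shift_matvec n A s ^^ k) x"
  have "a ^ Suc k * l1_on {..<m} x \<le> a * l1_on {..<m} ?y"
    using Suc \<open>0 \<le> a\<close> by (simp add: mult.assoc mult_left_mono)
  also have "\<dots> \<le> l1_on {..<m} (shift_matvec n A s ?y)"
    using assms krylov_vanishesD[OF krylov_vanishes_shift_matvec_power[OF assms(8)]]
    by (intro l1_on_shift_matvec_ge[where d = d] tridiagonal_decoupled_head) auto
  finally show ?case
    by simp
qed simp

lemma krylov_tail_decays:
  fixes b e s :: real and d :: "nat \<Rightarrow> real"
  assumes "tridiagonal n A"
    and "\<And>k. k \<le> n \<Longrightarrow> A k k = complex_of_real (d k)"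
    and "\<And>k l. k \<le> n \<Longrightarrow> l \<le> n \<Longrightarrow> l \<noteq> k \<Longrightarrow> cmod (A k l) \<le> e" "0 \<le> e"
    and "0 \<le> b" "\<And>k. m < k \<Longrightarrow> k \<le> n \<Longrightarrow> 0 \<le> s - d k \<and> s - d k \<le> b - real (n - m) * e"
    and "krylov_vanishes n A m x"
  shows "l1_on {m<..n} ((shift_matvec n A s ^^ k) x) \<le> b ^ k * l1_on {m<..n} x"
proof (induction k)
  case (Suc k)
  let ?y = "(shift_matvec n A s ^^ k) x"
  have "l1_on {m<..n} (shift_matvec n A s ?y) \<le> b * l1_on {m<..n} ?y"
    using assms krylov_vanishesD[OF krylov_vanishes_shift_matvec_power[OF assms(7)]]
    by (intro l1_on_shift_matvec_le[where d = d] tridiagonal_decoupled_tail) auto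
  also have "\<dots> \<le> b ^ Suc k * l1_on {m<..n} x"
    using Suc \<open>0 \<le> b\<close> by (simp add: mult.assoc mult_left_mono)
  finally show ?case
    by simp
qed simp

lemma tridiagonal_krylov_vanishes_eq_0:
  fixes a b e s :: real and d :: "nat \<Rightarrow> real"
  assumes tri: "tridiagonal n A"
    and super: "\<And>p. p < n \<Longrightarrow> A p (Suc p) \<noteq> 0"
    and sub: "\<And>p. p < n \<Longrightarrow> A (Suc p) p \<noteq> 0"
    and "m \<le> n"
    and diag: "\<And>k. k \<le> n \<Longrightarrow> A k k = complex_of_real (d k)"
    and off: "\<And>k l. k \<le> n \<Longrightarrow> l \<le> n \<Longrightarrow> l \<noteq> k \<Longrightarrow> cmod (A k l) \<le> e" and "0 \<le> e"
    and "0 \<le> b" "b < a"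
    and head_gap: "\<And>k. k < m \<Longrightarrow> a + m * e \<le> s - d k"
    and tail_gap: "\<And>k. m < k \<Longrightarrow> k \<le> n \<Longrightarrow> 0 \<le> s - d k \<and> s - d k \<le> b - real (n - m) * e"
    and "krylov_vanishes n A m x" "j \<le> n"
  shows "x j = 0"
proof -
  obtain K where "K \<ge> 0"
    and K: "\<And>y l. krylov_vanishes n A m y \<Longrightarrow> l \<le> n \<Longrightarrow> cmod (y l) \<le> K * l1_on {m<..n} y"
    using krylov_vanishes_bounded_by_tail[OF tri sub \<open>m \<le> n\<close>] by blast
  have head_by_tail: "l1_on {..<m} y \<le> m * K * l1_on {m<..n} y" if "krylov_vanishes n A m y" for y
  proof -
    have "l1_on {..<m} y \<le> (\<Sum>k<m. K * l1_on {m<..n} y)"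
      unfolding l1_on_def[of "{..<m}"] using K[OF that] \<open>m \<le> n\<close> by (intro sum_mono) auto
    then show ?thesis
      by simp
  qed
  have "0 \<le> a"
    using \<open>0 \<le> b\<close> \<open>b < a\<close> by simp
  have "a ^ k * l1_on {..<m} x \<le> b ^ k * (m * K * l1_on {m<..n} x)" for k
  proof -
    let ?y = "(shift_matvec n A s ^^ k) x"
    have "a ^ k * l1_on {..<m} x \<le> l1_on {..<m} ?y"
      using \<open>0 \<le> a\<close>
      by (intro krylov_head_grows[OF tri \<open>m \<le> n\<close> diag off \<open>0 \<le> e\<close> _ head_gap]) (simp_all add: assms)
    also have "\<dots> \<le> m * K * l1_on {m<..n} ?y"
      using head_by_tail krylov_vanishes_shift_matvec_power assms by blast
    also have "\<dots> \<le> m * K * (b ^ k * l1_on {m<..n} x)"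
      using \<open>K \<ge> 0\<close>
      by (intro mult_left_mono krylov_tail_decays[OF tri diag off \<open>0 \<le> e\<close> \<open>0 \<le> b\<close> tail_gap])
        (simp_all add: assms)
    finally show ?thesis
      by (simp add: algebra_simps)
  qed
  then have "l1_on {..<m} x = 0"
    using nonpos_if_geometric_domination[OF \<open>0 \<le> b\<close> \<open>b < a\<close>] l1_on_nonneg[of "{..<m}" x]
    by (meson order_antisym)
  moreover obtain K' where
    "\<And>y l. krylov_vanishes n A m y \<Longrightarrow> l \<le> n \<Longrightarrow> cmod (y l) \<le> K' * l1_on {..<m} y"
    using krylov_vanishes_bounded_by_head[OF tri super \<open>m \<le> n\<close>] by blast
  ultimately show ?thesis
    using \<open>krylov_vanishes n A m x\<close> \<open>j \<le> n\<close> by fastforce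
qed

lemma Fz_squared:
  assumes "j \<le> n"
  shows "mmul n (Fz n) (Fz n) j l = (if j = l then complex_of_real ((real j - spinJ n)^2) else 0)"
proof -
  have "(\<Sum>p\<le>n. Fz n j p * Fz n p l) = (\<Sum>p\<le>n. if p = j then Fz n j j * Fz n j l else 0)"
    by (rule sum.cong) (auto simp: Fz_def)
  also have "\<dots> = Fz n j j * Fz n j l"
    using assms by simp
  finally show ?thesis
    by (simp add: mmul_def Fz_def power2_eq_square)
qed

lemma Gen_offdiag: "j \<le> n \<Longrightarrow> j \<noteq> l \<Longrightarrow> Gen n C j l = - \<i> * Fy n j l"
  by (simp add: Gen_def Fz_squared Fz_def)

lemma Gen_diag:
  "j \<le> n \<Longrightarrow> Gen n C j j = complex_of_real (C * (real j - spinJ n) - (real j - spinJ n)^2)"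
  by (simp add: Gen_def Fz_squared Fz_def Fy_def)

lemma tridiagonal_Gen: "tridiagonal n (Gen n C)"
  by (auto simp: tridiagonal_def Gen_offdiag Fy_def)

lemma cc_pos: "- spinJ n - 1 < x \<Longrightarrow> x < spinJ n \<Longrightarrow> 0 < cc n x"
  unfolding cc_def by simp

lemma Gen_superdiag_nonzero: "p < n \<Longrightarrow> Gen n C p (Suc p) \<noteq> 0"
  using cc_pos[of n "spinJ n - real (Suc p)"] by (simp add: Gen_offdiag Fy_def spinJ_def)

lemma Gen_subdiag_nonzero: "p < n \<Longrightarrow> Gen n C (Suc p) p \<noteq> 0"
  using cc_pos[of n "real p - spinJ n"] by (simp add: Gen_offdiag Fy_def spinJ_def)

lemma Gen_offdiag_bound:
  assumes "k \<le> n" "l \<le> n" "l \<noteq> k"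
  shows "cmod (Gen n C k l) \<le> (\<Sum>j\<le>n. \<Sum>l\<le>n. cmod (Fy n j l))"
proof -
  have "cmod (Fy n k l) \<le> (\<Sum>l\<le>n. cmod (Fy n k l))"
    using assms by (intro member_le_sum) auto
  also have "\<dots> \<le> (\<Sum>j\<le>n. \<Sum>l\<le>n. cmod (Fy n j l))"
    using assms by (intro member_le_sum[where f = "\<lambda>j. \<Sum>l\<le>n. cmod (Fy n j l)"] sum_nonneg) auto
  finally show ?thesis
    using assms by (simp add: Gen_offdiag norm_mult)
qed

lemma Gen_shifted_diag:
  "k \<le> n \<Longrightarrow> C * spinJ n - Re (Gen n C k k) = C * (real n - real k) + (real k - spinJ n)^2"
  by (simp add: Gen_diag spinJ_def algebra_simps)

lemma spinJ_offset_squared_le: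
  assumes "k \<le> n"
  shows "(real k - spinJ n)^2 \<le> (spinJ n)^2"
proof -
  have "(real k - spinJ n)^2 - (spinJ n)^2 = real k * (real k - real n)"
    by (simp add: spinJ_def power2_eq_square algebra_simps)
  also have "\<dots> \<le> 0"
    using assms by (simp add: mult_nonneg_nonpos)
  finally show ?thesis
    by simp
qed

lemma Gen_krylov_vanishes_eq_0:
  assumes "m \<le> n"
  shows "\<exists>C0. \<forall>C\<ge>C0. \<forall>y. krylov_vanishes n (Gen n C) m y \<longrightarrow> (\<forall>j\<le>n. y j = 0)"
proof -
  define J where "J = spinJ n"
  define e where "e = (\<Sum>j\<le>n. \<Sum>l\<le>n. cmod (Fy n j l))"
  have "0 \<le> e"
    unfolding e_def by (simp add: sum_nonneg)
  have off: "cmod (Gen n C k l) \<le> e" if "k \<le> n" "l \<le> n" "l \<noteq> k" for C k l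
    unfolding e_def using that by (rule Gen_offdiag_bound)
  show ?thesis
  proof (intro exI[of _ "J^2 + 2 * n * e + 1"] allI impI)
    fix C y j
    assume C: "J^2 + 2 * n * e + 1 \<le> C" and "krylov_vanishes n (Gen n C) m y" and "j \<le> n"
    have "0 \<le> C"
      using C \<open>0 \<le> e\<close> by (smt (verit) zero_le_power2 mult_nonneg_nonneg of_nat_0_le_iff)
    \<comment> \<open>The shifted diagonal is at least \<open>C(n - m + 1)\<close> on the head and at most
      \<open>C(n - m) + J\<^sup>2\<close> on the tail; a and b leave room for the off-diagonal entries.\<close>
    define a where "a = C * (real n - real m + 1) - n * e"
    define b where "b = C * (n - m) + J^2 + n * e"
    have shifted_diag: "C * J - Re (Gen n C k k) = C * (real n - real k) + (real k - J)^2"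
      if "k \<le> n" for k
      unfolding J_def using that by (rule Gen_shifted_diag)
    have head_gap: "a + m * e \<le> C * J - Re (Gen n C k k)" if "k < m" for k
    proof -
      have "a + m * e \<le> C * (real n - real m + 1)"
        unfolding a_def using \<open>m \<le> n\<close> \<open>0 \<le> e\<close> by (simp add: mult_right_mono)
      also have "\<dots> \<le> C * (real n - real k)"
        using that \<open>0 \<le> C\<close> by (intro mult_left_mono) auto
      also have "\<dots> \<le> C * J - Re (Gen n C k k)"
        using that \<open>m \<le> n\<close> shifted_diag[of k] by simp
      finally show ?thesis .
    qed
    have tail_gap: "0 \<le> C * J - Re (Gen n C k k) \<and> C * J - Re (Gen n C k k) \<le> b - real (n - m) * e"
      if "m < k" "k \<le> n" for k
    proof -
      have "C * (real n - real k) \<le> C * (n - m)"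
        using that \<open>0 \<le> C\<close> by (intro mult_left_mono) auto
      moreover have "0 \<le> C * (real n - real k)"
        using that \<open>0 \<le> C\<close> by simp
      moreover have "(real k - J)^2 \<le> J^2"
        unfolding J_def using that by (intro spinJ_offset_squared_le) simp
      moreover have "b - real (n - m) * e = C * (n - m) + J^2 + m * e"
        using \<open>m \<le> n\<close> by (simp add: b_def of_nat_diff algebra_simps)
      moreover have "0 \<le> m * e"
        using \<open>0 \<le> e\<close> by simp
      ultimately show ?thesis
        using shifted_diag[OF \<open>k \<le> n\<close>] zero_le_power2[of "real k - J"] by linarith
    qed
    have "0 \<le> b"
      using \<open>0 \<le> C\<close> \<open>0 \<le> e\<close> by (simp add: b_def)
    have "b < a"
      using C \<open>m \<le> n\<close> by (simp add: a_def b_def algebra_simps of_nat_diff)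
    have diag: "Gen n C k k = complex_of_real (Re (Gen n C k k))" if "k \<le> n" for k
      using that by (simp add: Gen_diag)
    show "y j = 0"
      by (rule tridiagonal_krylov_vanishes_eq_0[OF tridiagonal_Gen Gen_superdiag_nonzero
            Gen_subdiag_nonzero \<open>m \<le> n\<close> diag off \<open>0 \<le> e\<close> \<open>0 \<le> b\<close> \<open>b < a\<close> head_gap tail_gap
            \<open>krylov_vanishes n (Gen n C) m y\<close> \<open>j \<le> n\<close>])
  qed
qed

lemma vdot_psi: "m \<le> n \<Longrightarrow> vdot n w (psi m) = cnj (w m)"
  by (simp add: vdot_def psi_def if_distrib cong: if_cong)

theorem lemma4p3:
  fixes n :: nat and T :: real and m :: nat
  assumes "n > 0" and "T > 0" and "m \<le> n"
  shows "\<exists>C0::real. \<forall>C\<ge>C0. \<forall>v :: real \<Rightarrow> nat \<Rightarrow> complex.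
           solves_ode n (Gen n C) T v \<and> (\<exists>k\<le>n. v 0 k \<noteq> 0)
           \<longrightarrow> (\<exists>t\<in>{0..T}. vdot n (v t) (psi m) \<noteq> 0)"
proof -
  obtain C0 where C0: "\<And>C y j. C0 \<le> C \<Longrightarrow> krylov_vanishes n (Gen n C) m y \<Longrightarrow> j \<le> n \<Longrightarrow> y j = 0"
    using Gen_krylov_vanishes_eq_0[OF \<open>m \<le> n\<close>] by blast
  show ?thesis
  proof (intro exI[of _ C0] allI impI)
    fix C v assume "C0 \<le> C" and v: "solves_ode n (Gen n C) T v \<and> (\<exists>k\<le>n. v 0 k \<noteq> 0)"
    show "\<exists>t\<in>{0..T}. vdot n (v t) (psi m) \<noteq> 0"
    proof (rule ccontr)
      assume "\<not> ?thesis"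
      then have "\<forall>t\<in>{0..T}. v t m = 0"
        using vdot_psi[OF \<open>m \<le> n\<close>] by auto
      then have "krylov_vanishes n (Gen n C) m (v 0)"
        using solves_ode_krylov_vanishes v \<open>T > 0\<close> \<open>m \<le> n\<close> by blast
      then show False
        using C0[OF \<open>C0 \<le> C\<close>] v by blast
    qed
  qed
qed

end
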